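(* Let $f$ be as in the standing setting. For $x\in X$ let $x^+=[x-\frac{1}{L_f}\nabla f(x)]_X$ and $\bar x^+=[x^+]_{X^*}$. Suppose there is a constant $\beta$ with $0<\beta<1$ such that $$\|x^+-\bar x^+\|\le\beta\|x-\bar x\|\qquad\forall x\in X.$$ Then $f$ satisfies the quadratic functional growth condition $f(x)-f^*\ge\frac{\kappa_f}{2}\|x-\bar x\|^2$ for all $x\in X$ with $\kappa_f=L_f(1-\beta)^2$.
   Context: Standing setting: $X\subseteq\mathbb{R}^n$ is a nonempty closed convex set; $f:X\to\mathbb{R}$ is convex and continuously differentiable, with $L_f$-Lipschitz continuous gradient on $X$ ($L_f>0$). Consider $f^*=\min_{x\in X}f(x)$ with optimal set $X^*$ nonempty and closed and $f^*$ finite. $\|\cdot\|$ is the Euclidean norm, $[u]_S$ is the Euclidean projection onto a closed convex set $S$, and $\bar x=[x]_{X^*}$. *)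

theory Defs
  imports "HOL-Analysis.Analysis"
begin

text \<open>Euclidean projection onto a closed convex set S is the library's closest_point S.
  Optimal value and optimal set of min over X of f.\<close>

definition opt_val :: "('a \<Rightarrow> real) \<Rightarrow> 'a set \<Rightarrow> real" where
  "opt_val f X = (INF x\<in>X. f x)"

definition opt_set :: "('a \<Rightarrow> real) \<Rightarrow> 'a set \<Rightarrow> 'a set" where
  "opt_set f X = {x \<in> X. f x = opt_val f X}"

end

theory Submission
  imports Defs
begin

(* One projected gradient step x \<mapsto> x+ decreases f by at least L/2 |x - x+|^2: the descent
   lemma bounds f(x+) from above, and the variational inequality of the projection controls
   the linear term. The error bound makes x+ closer to the optimal set than x by the factor
   \<beta>, so by the triangle inequality (1 - \<beta>) |x - x\<^sup>*| \<le> |x - x+| with x\<^sup>* the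
   projection of x onto the optimal set. Since f(x+) is at least the optimal value, the
   quadratic growth follows. *)

lemma descent_lemma:
  fixes f :: "'a::euclidean_space \<Rightarrow> real" and g :: "'a \<Rightarrow> 'a"
  assumes "convex X" and x: "x \<in> X" and y: "y \<in> X"
    and f_grad: "\<And>x. x \<in> X \<Longrightarrow> (f has_derivative (\<lambda>h. g x \<bullet> h)) (at x within X)"
    and g_lip: "\<And>x y. x \<in> X \<Longrightarrow> y \<in> X \<Longrightarrow> norm (g x - g y) \<le> L * norm (x - y)"
  shows "f y \<le> f x + g x \<bullet> (y - x) + L / 2 * (norm (y - x))\<^sup>2"
proof -
  define u where "u = y - x"
  define p where "p = (\<lambda>t::real. x + t *\<^sub>R u)"
  have pX: "p t \<in> X" if "t \<in> {0..1}" for t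
  proof -
    have "p t = (1 - t) *\<^sub>R x + t *\<^sub>R y" by (simp add: p_def u_def algebra_simps)
    then show ?thesis using that \<open>convex X\<close> x y by (auto simp: convex_alt)
  qed
  define \<psi> where "\<psi> = (\<lambda>t. f (p t) - t * (g x \<bullet> u) - t\<^sup>2 * (L/2 * (norm u)\<^sup>2))"
  have d\<psi>: "(\<psi> has_derivative
      (\<lambda>h. h * (g (p t) \<bullet> u) - h * (g x \<bullet> u) - h * (2 * t * (L/2 * (norm u)\<^sup>2))))
      (at t within {0..1})" if "0 \<le> t" "t \<le> 1" for t
  proof -
    have dp: "(p has_derivative (\<lambda>h. h *\<^sub>R u)) (at t within {0..1})"
      unfolding p_def by (auto intro!: derivative_eq_intros)
    have "(f has_derivative (\<lambda>h. g (p t) \<bullet> h)) (at (p t) within p ` {0..1})"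
      by (rule has_derivative_subset[where s = X]) (use f_grad pX that in auto)
    from diff_chain_within[OF dp this]
    have "((\<lambda>t. f (p t)) has_derivative (\<lambda>h. h * (g (p t) \<bullet> u))) (at t within {0..1})"
      by (simp add: o_def)
    then show ?thesis unfolding \<psi>_def
      by (auto intro!: derivative_eq_intros simp: power2_eq_square algebra_simps)
  qed
  obtain t where t: "t \<in> {0<..<1}" and mvt:
      "\<psi> 1 - \<psi> 0 = (g (p t) - g x) \<bullet> u - 2 * t * (L/2 * (norm u)\<^sup>2)"
    using mvt_simple[of 0 1 \<psi>, OF _ d\<psi>] by (auto simp: inner_diff_left)
  have "(g (p t) - g x) \<bullet> u \<le> norm (g (p t) - g x) * norm u" by (rule norm_cauchy_schwarz)
  also have "\<dots> \<le> L * norm (p t - x) * norm u"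
    using g_lip[of "p t" x] pX[of t] t x by (auto intro: mult_right_mono)
  also have "\<dots> = L * t * (norm u)\<^sup>2" using t by (simp add: p_def power2_eq_square)
  finally have "\<psi> 1 \<le> \<psi> 0" using mvt by (simp add: algebra_simps)
  then show ?thesis by (simp add: \<psi>_def p_def u_def)
qed

lemma projected_gradient_step_inner_le:
  fixes X :: "'a::euclidean_space set" and v :: 'a
  assumes "convex X" "closed X" "x \<in> X" "L > 0"
  defines "xp \<equiv> closest_point X (x - (1 / L) *\<^sub>R v)"
  shows "L * (norm (x - xp))\<^sup>2 \<le> v \<bullet> (x - xp)"
proof -
  have "(x - (1 / L) *\<^sub>R v - xp) \<bullet> (x - xp) \<le> 0"
    unfolding xp_def using assms(1-3) by (rule closest_point_dot)
  then have "(norm (x - xp))\<^sup>2 \<le> (1 / L) * (v \<bullet> (x - xp))"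
    by (simp add: inner_diff_left power2_norm_eq_inner algebra_simps)
  then show ?thesis using \<open>L > 0\<close> by (simp add: field_simps)
qed

lemma projected_gradient_step_decrease:
  fixes f :: "'a::euclidean_space \<Rightarrow> real" and g :: "'a \<Rightarrow> 'a"
  assumes "convex X" "closed X" "x \<in> X" "L > 0"
    and f_grad: "\<And>x. x \<in> X \<Longrightarrow> (f has_derivative (\<lambda>h. g x \<bullet> h)) (at x within X)"
    and g_lip: "\<And>x y. x \<in> X \<Longrightarrow> y \<in> X \<Longrightarrow> norm (g x - g y) \<le> L * norm (x - y)"
  defines "xp \<equiv> closest_point X (x - (1 / L) *\<^sub>R g x)"
  shows "L / 2 * (norm (x - xp))\<^sup>2 \<le> f x - f xp"
proof -
  have "xp \<in> X" unfolding xp_def using \<open>closed X\<close> \<open>x \<in> X\<close> closest_point_in_set by blast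
  have "f xp \<le> f x + g x \<bullet> (xp - x) + L / 2 * (norm (xp - x))\<^sup>2"
    using descent_lemma[OF \<open>convex X\<close> \<open>x \<in> X\<close> \<open>xp \<in> X\<close> f_grad g_lip] .
  moreover have "L * (norm (x - xp))\<^sup>2 \<le> g x \<bullet> (x - xp)"
    unfolding xp_def using assms(1-4) by (rule projected_gradient_step_inner_le)
  ultimately show ?thesis by (simp add: inner_diff_right norm_minus_commute)
qed

lemma norm_closest_point_le_triangle:
  fixes S :: "'a::euclidean_space set"
  assumes "closed S" "S \<noteq> {}"
  shows "norm (x - closest_point S x) \<le> norm (x - y) + norm (y - closest_point S y)"
proof -
  have "dist x (closest_point S x) \<le> dist x (closest_point S y)"
    using assms closest_point_in_set closest_point_le by blast
  also have "\<dots> \<le> dist x y + dist y (closest_point S y)" by (rule dist_triangle)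
  finally show ?thesis by (simp add: dist_norm)
qed

lemma opt_val_le:
  assumes "bdd_below (f ` X)" "x \<in> X"
  shows "opt_val f X \<le> f x"
  unfolding opt_val_def using assms by (rule cINF_lower)

theorem theorem5:
  fixes f :: "real ^ 'n \<Rightarrow> real" and g :: "real ^ 'n \<Rightarrow> real ^ 'n"
    and X :: "(real ^ 'n) set" and L \<beta> :: real
  assumes X_ne: "X \<noteq> {}" and X_closed: "closed X" and X_convex: "convex X"
    and f_convex: "convex_on X f"
    and f_grad: "\<And>x. x \<in> X \<Longrightarrow> (f has_derivative (\<lambda>h. g x \<bullet> h)) (at x within X)"
    and g_cont: "continuous_on X g"
    and L_pos: "L > 0"
    and g_lip: "\<And>x y. x \<in> X \<Longrightarrow> y \<in> X \<Longrightarrow> norm (g x - g y) \<le> L * norm (x - y)"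
    and bdd: "bdd_below (f ` X)"
    and opt_ne: "opt_set f X \<noteq> {}"
    and opt_closed: "closed (opt_set f X)"
    and \<beta>_pos: "0 < \<beta>" and \<beta>_lt1: "\<beta> < 1"
    and EB: "\<And>x. x \<in> X \<Longrightarrow>
      (let xp = closest_point X (x - (1 / L) *\<^sub>R g x)
       in norm (xp - closest_point (opt_set f X) xp)
          \<le> \<beta> * norm (x - closest_point (opt_set f X) x))"
  shows "\<forall>x\<in>X. f x - opt_val f X
           \<ge> (L * (1 - \<beta>)\<^sup>2) / 2 * (norm (x - closest_point (opt_set f X) x))\<^sup>2"
proof
  fix x assume "x \<in> X"
  define S where "S = opt_set f X"
  define xp where "xp = closest_point X (x - (1 / L) *\<^sub>R g x)"
  have "xp \<in> X" unfolding xp_def using closest_point_in_set X_closed X_ne by blast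
  have "norm (x - closest_point S x) \<le> norm (x - xp) + \<beta> * norm (x - closest_point S x)"
    using norm_closest_point_le_triangle[OF opt_closed opt_ne, of x xp] EB[OF \<open>x \<in> X\<close>]
    by (simp add: xp_def S_def Let_def)
  then have "(1 - \<beta>) * norm (x - closest_point S x) \<le> norm (x - xp)"
    by (simp add: algebra_simps)
  then have "((1 - \<beta>) * norm (x - closest_point S x))\<^sup>2 \<le> (norm (x - xp))\<^sup>2"
    using \<beta>_lt1 by (intro power_mono) auto
  then have "L / 2 * ((1 - \<beta>) * norm (x - closest_point S x))\<^sup>2 \<le> f x - f xp"
    using projected_gradient_step_decrease[OF X_convex X_closed \<open>x \<in> X\<close> L_pos f_grad g_lip]
      L_pos unfolding xp_def by (smt (verit) mult_left_mono half_gt_zero)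
  then show "f x - opt_val f X
      \<ge> (L * (1 - \<beta>)\<^sup>2) / 2 * (norm (x - closest_point (opt_set f X) x))\<^sup>2"
    using opt_val_le[OF bdd \<open>xp \<in> X\<close>] by (simp add: S_def power_mult_distrib)
qed

end
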